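(* Let $d,n\ge 2$, $0\le\varepsilon\le 1/256$, and let $\mathcal U$ be a configuration of $n$ opinions in $\mathbb S^{d-1}$ that is $\varepsilon$-inactive. Then there is a unique partition of $[n]$ into clusters of $\mathcal U$. Furthermore, if $\varepsilon<\frac{1}{d(d+1)}$, then there are at most $d$ clusters.
   Context: Opinions are unit vectors in $\mathbb R^d$; a configuration is an $n$-tuple $(\vec u_1,\dots,\vec u_n)$, $A_{ij}=\langle\vec u_i,\vec u_j\rangle$. A configuration is $\varepsilon$-inactive if for all $i,j$, either $|A_{ij}|\le\varepsilon$ or $|A_{ij}|\ge 1-\varepsilon$. For an $\varepsilon$-inactive configuration, a nonempty set $C\subseteq[n]$ is a cluster if $|A_{ij}|\ge1-\varepsilon$ for all $i,j\in C$, and $|A_{ij}|\le\varepsilon$ for all $i\in C$, $j\notin C$. *)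

theory Defs
  imports "HOL-Analysis.Analysis" "HOL-Library.Disjoint_Sets"
begin

text \<open>A configuration of n opinions is a map u from indices [n] = {1..n} to real^'d,
  with A_ij = u i \<bullet> u j.\<close>

definition eps_inactive :: "real \<Rightarrow> nat \<Rightarrow> (nat \<Rightarrow> real ^ 'd) \<Rightarrow> bool" where
  "eps_inactive eps n u \<longleftrightarrow>
     (\<forall>i\<in>{1..n}. \<forall>j\<in>{1..n}. \<bar>u i \<bullet> u j\<bar> \<le> eps \<or> \<bar>u i \<bullet> u j\<bar> \<ge> 1 - eps)"

definition is_cluster :: "real \<Rightarrow> nat \<Rightarrow> (nat \<Rightarrow> real ^ 'd) \<Rightarrow> nat set \<Rightarrow> bool" where
  "is_cluster eps n u C \<longleftrightarrow>
     C \<noteq> {} \<and> C \<subseteq> {1..n} \<and>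
     (\<forall>i\<in>C. \<forall>j\<in>C. \<bar>u i \<bullet> u j\<bar> \<ge> 1 - eps) \<and>
     (\<forall>i\<in>C. \<forall>j\<in>{1..n} - C. \<bar>u i \<bullet> u j\<bar> \<le> eps)"

definition cluster_partition :: "real \<Rightarrow> nat \<Rightarrow> (nat \<Rightarrow> real ^ 'd) \<Rightarrow> nat set set \<Rightarrow> bool" where
  "cluster_partition eps n u P \<longleftrightarrow>
     partition_on {1..n} P \<and> (\<forall>C\<in>P. is_cluster eps n u C)"

end

theory Submission
  imports Defs
begin

text \<open>Call opinions i and j near if \<bar>u i \<bullet> u j\<bar> \<ge> 1 - \<epsilon>. For unit vectors nearness
  is transitive up to a loss of 4\<epsilon>, so in an \<epsilon>-inactive configuration with \<epsilon> < 1/5 it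
  is an equivalence relation, and the clusters are exactly its classes; hence the
  partition into clusters exists and is unique. Representatives of distinct clusters are
  unit vectors with pairwise \<bar>\<langle>v,w\<rangle>\<bar> \<le> \<epsilon>; their Gram matrix is strictly diagonally
  dominant as soon as (k - 1)\<epsilon> < 1, so for d\<epsilon> < 1 any d + 1 of them would be linearly
  independent in \<real>^d, which is impossible.\<close>

lemma abs_inner_near_one_trans:
  fixes x y z :: "'a::real_inner"
  assumes "norm x = 1" "norm y = 1" "norm z = 1"
    and "\<bar>x \<bullet> y\<bar> \<ge> 1 - e" "\<bar>y \<bullet> z\<bar> \<ge> 1 - e"
  shows "\<bar>x \<bullet> z\<bar> \<ge> 1 - 4 * e"
proof -
  have unit: "x \<bullet> x = 1" "y \<bullet> y = 1" "z \<bullet> z = 1"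
    using assms(1-3) by (simp_all add: norm_eq_1)
  define s :: real where "s = (if x \<bullet> y \<ge> 0 then 1 else -1)"
  define t :: real where "t = (if y \<bullet> z \<ge> 0 then 1 else -1)"
  have signs: "s * s = 1" "t * t = 1" "s * (x \<bullet> y) = \<bar>x \<bullet> y\<bar>" "t * (y \<bullet> z) = \<bar>y \<bullet> z\<bar>"
    by (auto simp: s_def t_def)
  \<comment> \<open>a + b = x - s t z, and |a + b|^2 \<le> 2|a|^2 + 2|b|^2\<close>
  define a where "a = x - s *\<^sub>R y"
  define b where "b = s *\<^sub>R y - (s * t) *\<^sub>R z"
  have aa: "a \<bullet> a = 2 - 2 * \<bar>x \<bullet> y\<bar>"
    unfolding a_def using unit signs
    by (simp add: inner_commute algebra_simps)
  have bb: "b \<bullet> b = 2 - 2 * \<bar>y \<bullet> z\<bar>"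
    unfolding b_def using unit signs
    by (simp add: inner_commute algebra_simps)
  have ab: "(a + b) \<bullet> (a + b) = 2 - 2 * (s * t) * (x \<bullet> z)"
    unfolding a_def b_def using unit signs
    by (simp add: inner_commute algebra_simps)
  have "(a - b) \<bullet> (a - b) \<ge> 0" by simp
  then have "(a + b) \<bullet> (a + b) \<le> 2 * (a \<bullet> a) + 2 * (b \<bullet> b)"
    by (simp add: inner_commute algebra_simps)
  then have "(s * t) * (x \<bullet> z) \<ge> 1 - 4 * e"
    using ab aa bb assms(4,5) by linarith
  moreover have "(s * t) * (x \<bullet> z) \<le> \<bar>x \<bullet> z\<bar>"
    by (auto simp: s_def t_def abs_if)
  ultimately show ?thesis by linarith
qed

lemma almost_orthonormal_independent:
  fixes V :: "'a::real_inner set"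
  assumes "finite V" and unit: "\<forall>v\<in>V. norm v = 1"
    and almost_orth: "\<forall>v\<in>V. \<forall>w\<in>V. v \<noteq> w \<longrightarrow> \<bar>v \<bullet> w\<bar> \<le> e"
    and small: "(real (card V) - 1) * e < 1"
  shows "independent V"
proof -
  have "c v0 = 0" if comb: "(\<Sum>v\<in>V. c v *\<^sub>R v) = 0" and "v0 \<in> V" for c v0
  proof (rule ccontr)
    assume "c v0 \<noteq> 0"
    obtain a where "a \<in> V" "\<bar>c a\<bar> = (MAX v\<in>V. \<bar>c v\<bar>)"
      using \<open>finite V\<close> \<open>v0 \<in> V\<close> Max_in[of "(\<lambda>v. \<bar>c v\<bar>) ` V"] by fastforce
    then have a: "a \<in> V" "\<forall>v\<in>V. \<bar>c v\<bar> \<le> \<bar>c a\<bar>"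
      using \<open>finite V\<close> by auto
    have pos: "\<bar>c a\<bar> > 0" using a \<open>v0 \<in> V\<close> \<open>c v0 \<noteq> 0\<close> by force
    have "0 = (\<Sum>v\<in>V. c v *\<^sub>R v) \<bullet> a" using comb by simp
    also have "\<dots> = (\<Sum>v\<in>V. c v * (v \<bullet> a))"
      by (simp add: inner_sum_left)
    also have "\<dots> = c a * (a \<bullet> a) + (\<Sum>v\<in>V - {a}. c v * (v \<bullet> a))"
      using \<open>finite V\<close> a(1) by (simp add: sum.remove)
    finally have ca: "c a = - (\<Sum>v\<in>V - {a}. c v * (v \<bullet> a))"
      using unit a(1) by (simp add: norm_eq_1)
    have "\<bar>c a\<bar> \<le> (\<Sum>v\<in>V - {a}. \<bar>c v * (v \<bullet> a)\<bar>)"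
      unfolding ca abs_minus_cancel by (rule sum_abs)
    also have "\<dots> \<le> (\<Sum>v\<in>V - {a}. \<bar>c a\<bar> * e)"
    proof (rule sum_mono)
      fix v assume v: "v \<in> V - {a}"
      then have "\<bar>v \<bullet> a\<bar> \<le> e" using almost_orth a(1) by auto
      then show "\<bar>c v * (v \<bullet> a)\<bar> \<le> \<bar>c a\<bar> * e"
        unfolding abs_mult using a(2) v by (intro mult_mono) auto
    qed
    also have "\<dots> = (real (card V) - 1) * e * \<bar>c a\<bar>"
    proof -
      have "card V \<ge> 1"
        using \<open>finite V\<close> a(1) by (simp add: Suc_le_eq card_gt_0_iff) blast
      then show ?thesis
        using \<open>finite V\<close> a(1) by (simp add: card_Diff_singleton)
    qed
    also have "\<dots> < \<bar>c a\<bar>"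
      using mult_strict_right_mono[OF small pos] by simp
    finally show False by simp
  qed
  then show ?thesis
    using dependent_finite[OF \<open>finite V\<close>] by blast
qed

lemma card_almost_orthonormal_le_DIM:
  fixes V :: "'a::euclidean_space set"
  assumes "finite V" and "\<forall>v\<in>V. norm v = 1"
    and "\<forall>v\<in>V. \<forall>w\<in>V. v \<noteq> w \<longrightarrow> \<bar>v \<bullet> w\<bar> \<le> e"
    and "real DIM('a) * e < 1"
  shows "card V \<le> DIM('a)"
proof (rule ccontr)
  assume "\<not> card V \<le> DIM('a)"
  then obtain W where W: "W \<subseteq> V" "card W = Suc DIM('a)"
    using obtain_subset_with_card_n[of "Suc DIM('a)" V] by auto
  then have "independent W"
    using assms by (intro almost_orthonormal_independent) (auto intro: finite_subset)
  then show False
    using independent_bound W(2) by fastforce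
qed

lemma partition_on_subset_quotient_eq:
  assumes "equiv A r" and "partition_on A P" and "P \<subseteq> A // r"
  shows "P = A // r"
proof
  show "A // r \<subseteq> P"
  proof
    fix X assume "X \<in> A // r"
    then obtain x where x: "x \<in> A" "X = r `` {x}" by (auto elim: quotientE)
    then obtain D where D: "D \<in> P" "x \<in> D"
      using partition_onD1[OF assms(2)] by blast
    have "x \<in> D \<inter> X" using D x equiv_class_self[OF assms(1)] by auto
    then show "X \<in> P"
      using quotient_disj[OF assms(1) \<open>X \<in> A // r\<close>, of D] D assms(3) by auto
  qed
qed (use assms in simp)

definition near_rel :: "real \<Rightarrow> nat \<Rightarrow> (nat \<Rightarrow> 'a::real_inner) \<Rightarrow> nat rel" where
  "near_rel eps n u = {(i, j) \<in> {1..n} \<times> {1..n}. 1 - eps \<le> \<bar>u i \<bullet> u j\<bar>}"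

lemma equiv_near_rel:
  fixes u :: "nat \<Rightarrow> real ^ 'd"
  assumes unit: "\<forall>i\<in>{1..n}. norm (u i) = 1" and inactive: "eps_inactive eps n u"
    and "0 \<le> eps" "eps < 1 / 5"
  shows "equiv {1..n} (near_rel eps n u)"
proof (rule equivI)
  show "near_rel eps n u \<subseteq> {1..n} \<times> {1..n}"
    by (auto simp: near_rel_def)
  show "refl_on {1..n} (near_rel eps n u)"
    using unit \<open>0 \<le> eps\<close> by (auto simp: refl_on_def near_rel_def norm_eq_1)
  show "sym (near_rel eps n u)"
    by (auto simp: sym_def near_rel_def inner_commute)
  show "trans (near_rel eps n u)"
  proof (rule transI)
    fix i j k assume "(i, j) \<in> near_rel eps n u" "(j, k) \<in> near_rel eps n u"
    then have ijk: "i \<in> {1..n}" "j \<in> {1..n}" "k \<in> {1..n}"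
      and "\<bar>u i \<bullet> u j\<bar> \<ge> 1 - eps" "\<bar>u j \<bullet> u k\<bar> \<ge> 1 - eps"
      by (auto simp: near_rel_def)
    then have "\<bar>u i \<bullet> u k\<bar> \<ge> 1 - 4 * eps"
      using unit abs_inner_near_one_trans by blast
    then show "(i, k) \<in> near_rel eps n u"
      using inactive ijk \<open>eps < 1 / 5\<close>
      unfolding eps_inactive_def near_rel_def by force
  qed
qed

lemma is_cluster_iff_in_quotient:
  fixes u :: "nat \<Rightarrow> real ^ 'd"
  assumes unit: "\<forall>i\<in>{1..n}. norm (u i) = 1" and inactive: "eps_inactive eps n u"
    and "0 \<le> eps" "eps < 1 / 5"
  shows "is_cluster eps n u C \<longleftrightarrow> C \<in> {1..n} // near_rel eps n u"
proof
  assume C: "is_cluster eps n u C"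
  then obtain i where i: "i \<in> C" "i \<in> {1..n}"
    unfolding is_cluster_def by blast
  have "C = near_rel eps n u `` {i}"
  proof
    show "C \<subseteq> near_rel eps n u `` {i}"
    proof
      fix j assume "j \<in> C"
      then have "j \<in> {1..n}" "1 - eps \<le> \<bar>u i \<bullet> u j\<bar>"
        using C i unfolding is_cluster_def by auto
      then show "j \<in> near_rel eps n u `` {i}"
        using i by (simp add: near_rel_def)
    qed
    show "near_rel eps n u `` {i} \<subseteq> C"
    proof
      fix k assume "k \<in> near_rel eps n u `` {i}"
      then have k: "k \<in> {1..n}" "1 - eps \<le> \<bar>u i \<bullet> u k\<bar>"
        by (auto simp: near_rel_def)
      show "k \<in> C"
      proof (rule ccontr)
        assume "k \<notin> C"
        then have "\<bar>u i \<bullet> u k\<bar> \<le> eps"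
          using C i k unfolding is_cluster_def by blast
        with k(2) \<open>eps < 1 / 5\<close> show False by linarith
      qed
    qed
  qed
  then show "C \<in> {1..n} // near_rel eps n u"
    using i by (simp add: quotientI)
next
  assume "C \<in> {1..n} // near_rel eps n u"
  then obtain i where i: "i \<in> {1..n}" and C: "C = near_rel eps n u `` {i}"
    by (auto elim: quotientE)
  have eq: "equiv {1..n} (near_rel eps n u)"
    using equiv_near_rel assms by blast
  then have "sym (near_rel eps n u)" "trans (near_rel eps n u)"
    by (auto elim: equivE)
  then have near_iff: "(j, k) \<in> near_rel eps n u \<longleftrightarrow> k \<in> C" if "j \<in> C" for j k
    using that unfolding C by (meson Image_singleton_iff symD transD)
  have "C \<subseteq> {1..n}"
    using C by (auto simp: near_rel_def)
  show "is_cluster eps n u C"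
    unfolding is_cluster_def
  proof (intro conjI ballI)
    show "C \<noteq> {}"
      using equiv_class_self[OF eq i] C by blast
    show "C \<subseteq> {1..n}" by fact
    show "1 - eps \<le> \<bar>u j \<bullet> u k\<bar>" if "j \<in> C" "k \<in> C" for j k
      using near_iff[OF that(1), of k] that by (simp add: near_rel_def)
    show "\<bar>u j \<bullet> u k\<bar> \<le> eps" if "j \<in> C" "k \<in> {1..n} - C" for j k
    proof -
      have jk: "j \<in> {1..n}" "k \<in> {1..n}"
        using that \<open>C \<subseteq> {1..n}\<close> by auto
      then have "\<not> 1 - eps \<le> \<bar>u j \<bullet> u k\<bar>"
        using near_iff[OF that(1), of k] that by (simp add: near_rel_def)
      then show ?thesis
        using jk inactive unfolding eps_inactive_def by blast
    qed
  qed
qed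

lemma cluster_partition_iff_quotient:
  fixes u :: "nat \<Rightarrow> real ^ 'd"
  assumes "\<forall>i\<in>{1..n}. norm (u i) = 1" and "eps_inactive eps n u"
    and "0 \<le> eps" "eps < 1 / 5"
  shows "cluster_partition eps n u P \<longleftrightarrow> P = {1..n} // near_rel eps n u"
  using equiv_near_rel[OF assms] is_cluster_iff_in_quotient[OF assms]
    partition_on_quotient partition_on_subset_quotient_eq
  unfolding cluster_partition_def by blast

lemma card_cluster_partition_le_CARD:
  fixes u :: "nat \<Rightarrow> real ^ 'd"
  assumes unit: "\<forall>i\<in>{1..n}. norm (u i) = 1" and P: "cluster_partition eps n u P"
    and small: "real CARD('d) * eps < 1"
  shows "card P \<le> CARD('d)"
proof -
  have part: "partition_on {1..n} P" and cl: "\<And>C. C \<in> P \<Longrightarrow> is_cluster eps n u C"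
    using P by (auto simp: cluster_partition_def)
  have "\<forall>C\<in>P. \<exists>i. i \<in> C"
    using partition_onD3[OF part] by (metis ex_in_conv)
  then obtain r where r: "\<And>C. C \<in> P \<Longrightarrow> r C \<in> C"
    by metis
  have rn: "r C \<in> {1..n}" if "C \<in> P" for C
    using r[OF that] partition_onD1[OF part] that by blast
  have apart: "\<bar>u (r C) \<bullet> u (r D)\<bar> \<le> eps" if "C \<in> P" "D \<in> P" "C \<noteq> D" for C D
  proof -
    have "r D \<notin> C"
      using partition_onD2[OF part] r[OF that(2)] that by (auto simp: disjoint_def)
    then show ?thesis
      using cl[OF that(1)] r[OF that(1)] rn[OF that(2)] unfolding is_cluster_def by blast
  qed
  have "eps < 1"
  proof (rule ccontr)
    assume "\<not> eps < 1"
    then have "1 * 1 \<le> real CARD('d) * eps"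
      by (intro mult_mono) auto
    with small show False by simp
  qed
  have inj: "inj_on (u \<circ> r) P"
  proof (rule inj_onI)
    fix C D assume CD: "C \<in> P" "D \<in> P" "(u \<circ> r) C = (u \<circ> r) D"
    show "C = D"
    proof (rule ccontr)
      assume "C \<noteq> D"
      then have "\<bar>u (r C) \<bullet> u (r D)\<bar> \<le> eps"
        using apart CD by blast
      moreover have "u (r C) \<bullet> u (r D) = 1"
        using CD(3) unit rn[OF \<open>C \<in> P\<close>] norm_eq_1 by (metis comp_apply)
      ultimately show False
        using \<open>eps < 1\<close> by simp
    qed
  qed
  have "finite P"
    using finite_elements[OF finite_atLeastAtMost part] .
  have "card ((u \<circ> r) ` P) \<le> DIM(real ^ 'd)"
  proof (rule card_almost_orthonormal_le_DIM[where e = eps])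
    show "finite ((u \<circ> r) ` P)"
      using \<open>finite P\<close> by simp
    show "\<forall>v\<in>(u \<circ> r) ` P. norm v = 1"
      using unit rn by auto
    show "\<forall>v\<in>(u \<circ> r) ` P. \<forall>w\<in>(u \<circ> r) ` P. v \<noteq> w \<longrightarrow> \<bar>v \<bullet> w\<bar> \<le> eps"
      using apart by auto
    show "real DIM(real ^ 'd) * eps < 1"
      using small by simp
  qed
  then show ?thesis
    using card_image[OF inj] by simp
qed

theorem mainTheorem10:
  fixes u :: "nat \<Rightarrow> real ^ 'd" and n :: nat and eps :: real
  assumes "CARD('d) \<ge> 2" and "n \<ge> 2"
    and "0 \<le> eps" and "eps \<le> 1 / 256"
    and "\<forall>i\<in>{1..n}. norm (u i) = 1"
    and "eps_inactive eps n u"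
  shows "(\<exists>!P. cluster_partition eps n u P) \<and>
         (eps < 1 / (real CARD('d) * (real CARD('d) + 1)) \<longrightarrow>
            (\<forall>P. cluster_partition eps n u P \<longrightarrow> card P \<le> CARD('d)))"
proof -
  have "eps < 1 / 5" using assms(4) by simp
  then have "\<exists>!P. cluster_partition eps n u P"
    using cluster_partition_iff_quotient[OF assms(5,6,3)] by simp
  moreover have "real CARD('d) * eps < 1"
    if "eps < 1 / (real CARD('d) * (real CARD('d) + 1))"
  proof -
    have "eps * (real CARD('d) * (real CARD('d) + 1)) < 1"
      using that by (simp add: pos_less_divide_eq)
    moreover have "real CARD('d) * eps \<le> eps * (real CARD('d) * (real CARD('d) + 1))"
      using assms(3) by (simp add: algebra_simps)
    ultimately show ?thesis by linarith
  qed
  ultimately show ?thesis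
    using card_cluster_partition_le_CARD assms(5) by blast
qed

end
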